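(* Let $m\ge 1$ and $k\ge 2$. The coefficients $a_{k,l,r}$ satisfy, for all integers $l\ge 0$, $$a_{k,l,r}=a_{k-1,l-1,r+1}-(m-r-1)\,a_{k,l,r+1}\qquad(0\le r\le m-1),$$ $$a_{k,l,m}=a_{k-1,l,0}-m\,a_{k,l+1,0}.$$
   Context: Falling factorials are $(y)^{\underline 0}=1$ and $(y)^{\underline j}=y(y-1)\cdots(y-j+1)$. For $k\ge1$ let $q_k=\lfloor mk/(m+1)\rfloor$. The reals $a_{k,0,m}$ and $a_{k,l,r}$ ($1\le l\le q_k$, $0\le r\le m$) are the unique coefficients with $$\big((x-1)^{\underline m}\big)^k=a_{k,0,m}(x-1)^{\underline m}+\sum_{l=1}^{q_k}\sum_{r=0}^m a_{k,l,r}\big((x)^{\underline{m+1}}\big)^l(x+r-m-1)^{\underline r}$$ in $\mathbb{R}[x]$. By convention, $a_{k,l,r}=0$ for all index triples not covered by this expansion, namely when $l<0$, when $l>q_k$, or when $l=0$ and $r\neq m$. *)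

theory Defs
  imports Complex_Main "HOL-Computational_Algebra.Polynomial"
begin

definition ffall :: "nat \<Rightarrow> 'a::comm_ring_1 \<Rightarrow> 'a" where
  "ffall j y = (\<Prod>i<j. (y - of_nat i))"

definition qk :: "nat \<Rightarrow> nat \<Rightarrow> nat" where
  "qk m k = (m * k) div (m + 1)"

abbreviation pX :: "real poly" where "pX \<equiv> [:0, 1:]"

definition is_expansion :: "nat \<Rightarrow> nat \<Rightarrow> (int \<Rightarrow> nat \<Rightarrow> real) \<Rightarrow> bool" where
  "is_expansion m k c \<longleftrightarrow>
     (\<forall>l r. c l r \<noteq> 0 \<longrightarrow> ((l = 0 \<and> r = m) \<or> (1 \<le> l \<and> l \<le> int (qk m k) \<and> r \<le> m))) \<and>
     (ffall m (pX - 1)) ^ k =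
        smult (c 0 m) (ffall m (pX - 1)) +
        (\<Sum>l\<in>{1..qk m k}. \<Sum>r\<le>m.
            smult (c (int l) r) ((ffall (m + 1) pX) ^ l * ffall r (pX + of_nat r - of_nat m - 1)))"

text \<open>a_{k,l,r} (for fixed m): the unique such coefficients (zero outside the expansion range).\<close>
definition acoef :: "nat \<Rightarrow> nat \<Rightarrow> int \<Rightarrow> nat \<Rightarrow> real" where
  "acoef m k = (THE c. is_expansion m k c)"

end

theory Submission
  imports Defs
begin

(* Write F = (x-1)^{\underline m}, P = (x)^{\underline{m+1}} = x F and G_r = (x+r-m-1)^{\underline r},
   so that G_0 = 1, G_m = F and x G_r = G_{r+1} + (m-r) G_r.  The products P^l G_r with r \<le> m
   are monic of pairwise distinct degrees l(m+1) + r, so every polynomial has a unique expansion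
   in them.  F divides all of them except G_0, ..., G_{m-1}, whose span has degree < deg F; hence
   for k \<ge> 1 the expansion of F^k has the shape required in the definition of a_{k,l,r}.
   Dividing an expansion by F works row by row, via P^l G_m = F P^l G_0 and
   P^l G_r = F P^{l-1} (G_{r+1} + (m-r) G_r) for l \<ge> 1; this gives the coefficient map
   quotient_coef, and uniqueness of the expansion of F^{k-1} = F^k / F yields both recurrences. *)

lemma sum_smult_eq_0_distinct_degree:
  fixes b :: "'i \<Rightarrow> 'a::idom poly"
  assumes "finite S" and "\<And>i. i \<in> S \<Longrightarrow> b i \<noteq> 0" and "inj_on (\<lambda>i. degree (b i)) S"
    and "(\<Sum>i\<in>S. smult (f i) (b i)) = 0"
  shows "\<forall>i\<in>S. f i = 0"
  using assms
proof (induction S rule: finite_ranking_induct[where f = "\<lambda>i. degree (b i)"])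
  case (insert x S)
  show ?case
  proof (cases "x \<in> S")
    case True
    then show ?thesis using insert by (simp add: insert_absorb)
  next
    case False
    have lower: "degree (b y) < degree (b x)" if "y \<in> S" for y
      using insert.hyps(2)[OF that] insert.prems(2) that False
      by (metis insertI1 insertI2 inj_onD order_le_less)
    have "coeff (\<Sum>i\<in>insert x S. smult (f i) (b i)) (degree (b x)) = f x * lead_coeff (b x)"
      using insert.hyps(1) False lower by (simp add: coeff_sum coeff_eq_0)
    then have "f x = 0"
      using insert.prems by simp
    moreover have "(\<Sum>i\<in>S. smult (f i) (b i)) = 0"
      using insert.prems(3) insert.hyps(1) False \<open>f x = 0\<close> by simp
    ultimately show ?thesis
      using insert.IH insert.prems(1,2) by auto
  qed
qed simp

lemma sum_smult_exists_by_degree: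
  fixes b :: "'i \<Rightarrow> 'a::field poly"
  assumes "finite S" and "\<And>d. d < N \<Longrightarrow> \<exists>i\<in>S. degree (b i) = d \<and> b i \<noteq> 0"
    and "degree p < N"
  shows "\<exists>f. p = (\<Sum>i\<in>S. smult (f i) (b i))"
  using assms(3)
proof (induction "degree p" arbitrary: p rule: less_induct)
  case less
  show ?case
  proof (cases "p = 0")
    case True
    then show ?thesis by (intro exI[of _ "\<lambda>_. 0"]) simp
  next
    case False
    obtain j where j: "j \<in> S" "degree (b j) = degree p" "b j \<noteq> 0"
      using assms(2) less.prems by blast
    define a where "a = lead_coeff p / lead_coeff (b j)"
    define p' where "p' = p - smult a (b j)"
    have "coeff p' (degree p) = 0"
      using j(3) by (simp add: p'_def a_def flip: j(2))
    moreover have "degree p' \<le> degree p"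
      using j by (simp add: p'_def degree_diff_le)
    ultimately have "p' = 0 \<or> degree p' < degree p"
      by (metis leading_coeff_0_iff order_le_less)
    then obtain f where f: "p' = (\<Sum>i\<in>S. smult (f i) (b i))"
    proof
      assume "p' = 0"
      then show thesis
        using that[of "\<lambda>_. 0"] by simp
    next
      assume "degree p' < degree p"
      then show thesis
        using less.hyps[of p'] less.prems that by auto
    qed
    have "p = (\<Sum>i\<in>S. smult (f i) (b i)) + smult a (b j)"
      by (simp add: p'_def flip: f)
    also have "\<dots> = (\<Sum>i\<in>S. smult (f i) (b i) + (if i = j then smult a (b i) else 0))"
      using assms(1) j(1) by (simp add: sum.distrib)
    also have "\<dots> = (\<Sum>i\<in>S. smult (f i + (if i = j then a else 0)) (b i))"
      by (intro sum.cong) (simp_all add: smult_add_left)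
    finally show ?thesis
      by (rule exI[of _ "\<lambda>i. f i + (if i = j then a else 0)"])
  qed
qed

lemma ffall_Suc_shift: "ffall (Suc j) y = y * ffall j (y - 1)"
  unfolding ffall_def prod.lessThan_Suc_shift by (simp add: algebra_simps)

lemma ffall_linear: "ffall j [:a, 1:] = (\<Prod>i<j. [:a - of_nat i, 1:])"
  unfolding ffall_def by (simp add: of_nat_poly)

lemma degree_ffall_linear:
  fixes a :: "'a::idom"
  shows "degree (ffall j [:a, 1:]) = j"
  by (simp add: ffall_linear degree_prod_eq_sum_degree)

lemma lead_coeff_ffall_linear:
  fixes a :: "'a::idom"
  shows "lead_coeff (ffall j [:a, 1:]) = 1"
  by (simp only: ffall_linear lead_coeff_prod) simp

lemma ffall_linear_nonzero: "ffall j [:a, 1:] \<noteq> (0 :: 'a::idom poly)"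
  using lead_coeff_ffall_linear[of j a] by auto

definition Fpoly :: "nat \<Rightarrow> real poly" where "Fpoly m = ffall m (pX - 1)"
definition Ppoly :: "nat \<Rightarrow> real poly" where "Ppoly m = ffall (m + 1) pX"
definition Gpoly :: "nat \<Rightarrow> nat \<Rightarrow> real poly" where
  "Gpoly m r = ffall r (pX + of_nat r - of_nat m - 1)"

lemma Fpoly_linear: "Fpoly m = ffall m [:-1, 1:]"
  by (simp add: Fpoly_def one_pCons)

lemma Gpoly_linear: "Gpoly m r = ffall r [:real r - real m - 1, 1:]"
  by (simp add: Gpoly_def of_nat_poly one_pCons algebra_simps)

lemma Gpoly_0 [simp]: "Gpoly m 0 = 1"
  by (simp add: Gpoly_def ffall_def)

lemma Gpoly_self: "Gpoly m m = Fpoly m"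
  by (simp add: Gpoly_def Fpoly_def)

lemma Ppoly_eq: "Ppoly m = pX * Fpoly m"
  by (simp add: Ppoly_def Fpoly_def ffall_Suc_shift)

lemma pX_mult_Gpoly: "pX * Gpoly m r = Gpoly m (Suc r) + smult (real m - real r) (Gpoly m r)"
proof -
  have "Gpoly m (Suc r) = [:real r - real m, 1:] * Gpoly m r"
    unfolding Gpoly_linear ffall_Suc_shift by (simp add: one_pCons algebra_simps)
  then show ?thesis by (simp add: one_pCons flip: smult_add_left)
qed

lemma degree_Gpoly: "degree (Gpoly m r) = r"
  by (simp add: Gpoly_linear degree_ffall_linear)

lemma Gpoly_nonzero: "Gpoly m r \<noteq> 0"
  by (simp add: Gpoly_linear ffall_linear_nonzero)

lemma degree_Fpoly: "degree (Fpoly m) = m"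
  by (simp add: Fpoly_linear degree_ffall_linear)

lemma Fpoly_nonzero: "Fpoly m \<noteq> 0"
  by (simp add: Fpoly_linear ffall_linear_nonzero)

definition basis_poly :: "nat \<Rightarrow> nat \<times> nat \<Rightarrow> real poly" where
  "basis_poly m i = Ppoly m ^ fst i * Gpoly m (snd i)"

lemma lead_coeff_basis_poly: "lead_coeff (basis_poly m i) = 1"
  unfolding basis_poly_def Ppoly_def Gpoly_linear lead_coeff_mult lead_coeff_power
  by (simp add: lead_coeff_ffall_linear)

lemma basis_poly_nonzero: "basis_poly m i \<noteq> 0"
  using lead_coeff_basis_poly[of m i] by auto

lemma degree_basis_poly: "degree (basis_poly m (l, r)) = l * (m + 1) + r"
  by (simp add: basis_poly_def Ppoly_def Gpoly_linear degree_mult_eq degree_power_eq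
      degree_ffall_linear ffall_linear_nonzero)

lemma inj_on_degree_basis_poly: "inj_on (\<lambda>i. degree (basis_poly m i)) (A \<times> {..m})"
proof (rule inj_onI)
  fix i j
  assume "i \<in> A \<times> {..m}" "j \<in> A \<times> {..m}" and deg: "degree (basis_poly m i) = degree (basis_poly m j)"
  then obtain l r l' r' where ij: "i = (l, r)" "j = (l', r')" and "r < m + 1" "r' < m + 1"
    by fastforce
  have eq: "l * (m + 1) + r = l' * (m + 1) + r'"
    using deg unfolding ij degree_basis_poly .
  have div_mod: "(l * n + r) div n = l \<and> (l * n + r) mod n = r" if "r < n" for l r n :: nat
    using that by simp
  show "i = j"
    using div_mod[OF \<open>r < m + 1\<close>, of l] div_mod[OF \<open>r' < m + 1\<close>, of l'] eq ij by metis
qed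

definition expansion :: "nat \<Rightarrow> nat \<Rightarrow> (int \<Rightarrow> nat \<Rightarrow> real) \<Rightarrow> real poly" where
  "expansion m L c = (\<Sum>i\<in>{..L} \<times> {..m}. smult (c (int (fst i)) (snd i)) (basis_poly m i))"

definition supported_box :: "nat \<Rightarrow> nat \<Rightarrow> (int \<Rightarrow> nat \<Rightarrow> real) \<Rightarrow> bool" where
  "supported_box m L c \<longleftrightarrow> (\<forall>l r. c l r \<noteq> 0 \<longrightarrow> 0 \<le> l \<and> l \<le> int L \<and> r \<le> m)"

lemma expansion_inject:
  assumes "supported_box m L c" and "supported_box m L c'"
    and "expansion m L c = expansion m L c'"
  shows "c = c'"
proof (intro ext)
  fix l r
  have "(\<Sum>i\<in>{..L} \<times> {..m}. smult (c (int (fst i)) (snd i) - c' (int (fst i)) (snd i))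
      (basis_poly m i)) = 0"
    using assms(3) by (simp add: expansion_def smult_diff_left sum_subtractf)
  then have box: "\<forall>i\<in>{..L} \<times> {..m}. c (int (fst i)) (snd i) - c' (int (fst i)) (snd i) = 0"
    by (intro sum_smult_eq_0_distinct_degree) (simp_all add: basis_poly_nonzero inj_on_degree_basis_poly)
  show "c l r = c' l r"
  proof (cases "0 \<le> l \<and> l \<le> int L \<and> r \<le> m")
    case True
    then show ?thesis
      using box[rule_format, of "(nat l, r)"] by auto
  next
    case False
    then have "c l r = 0" and "c' l r = 0"
      using assms(1,2) unfolding supported_box_def by blast+
    then show ?thesis
      by simp
  qed
qed

lemma expansion_exists:
  assumes "degree p < (L + 1) * (m + 1)"
  obtains c where "supported_box m L c" and "p = expansion m L c"
proof -
  have degrees: "\<exists>i\<in>{..L} \<times> {..m}. degree (basis_poly m i) = d \<and> basis_poly m i \<noteq> 0"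
    if "d < (L + 1) * (m + 1)" for d
  proof (intro bexI conjI)
    show "degree (basis_poly m (d div (m + 1), d mod (m + 1))) = d"
      by (simp only: degree_basis_poly div_mult_mod_eq)
    show "(d div (m + 1), d mod (m + 1)) \<in> {..L} \<times> {..m}"
      using less_mult_imp_div_less[OF that] by simp
  qed (rule basis_poly_nonzero)
  have "\<exists>f. p = (\<Sum>i\<in>{..L} \<times> {..m}. smult (f i) (basis_poly m i))"
    by (rule sum_smult_exists_by_degree[OF _ degrees assms]) simp_all
  then obtain f where f: "p = (\<Sum>i\<in>{..L} \<times> {..m}. smult (f i) (basis_poly m i))"
    by blast
  define c where "c l r = (if 0 \<le> l \<and> l \<le> int L \<and> r \<le> m then f (nat l, r) else 0)" for l r
  have "supported_box m L c"
    by (simp add: supported_box_def c_def)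
  moreover have "p = expansion m L c"
    unfolding f expansion_def by (intro sum.cong) (auto simp: c_def)
  ultimately show thesis ..
qed

lemma supported_box_mono: "supported_box m L c \<Longrightarrow> L \<le> L' \<Longrightarrow> supported_box m L' c"
  unfolding supported_box_def by force

lemma expansion_mono:
  assumes "supported_box m L c" and "L \<le> L'"
  shows "expansion m L' c = expansion m L c"
  unfolding expansion_def
proof (rule sum.mono_neutral_right)
  show "\<forall>i\<in>{..L'} \<times> {..m} - {..L} \<times> {..m}. smult (c (int (fst i)) (snd i)) (basis_poly m i) = 0"
    using assms(1) by (force simp: supported_box_def)
qed (use assms(2) in auto)

definition lower_row :: "nat \<Rightarrow> (int \<Rightarrow> nat \<Rightarrow> real) \<Rightarrow> int \<Rightarrow> real poly" where
  "lower_row m c l = (\<Sum>r<m. smult (c l r) (Gpoly m r))"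

lemma row_eq_lower_row:
  "(\<Sum>r\<le>m. smult (c l r) (Gpoly m r)) = smult (c l m) (Fpoly m) + lower_row m c l"
  by (simp add: lower_row_def Gpoly_self flip: lessThan_Suc_atMost)

lemma expansion_by_rows:
  "expansion m L c = (\<Sum>l\<le>L. Ppoly m ^ l * (\<Sum>r\<le>m. smult (c (int l) r) (Gpoly m r)))"
  unfolding expansion_def basis_poly_def sum.cartesian_product'
  by (simp add: sum_distrib_left mult_smult_right)

lemma expansion_split_first_row:
  "expansion m L c = (\<Sum>r\<le>m. smult (c 0 r) (Gpoly m r)) +
     (\<Sum>l\<in>{1..L}. Ppoly m ^ l * (\<Sum>r\<le>m. smult (c (int l) r) (Gpoly m r)))"
proof -
  have "{..L} = insert 0 {1..L}"
    by auto
  then show ?thesis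
    by (simp add: expansion_by_rows)
qed

lemma Fpoly_dvd_expansion_imp_coef_eq_0:
  assumes "Fpoly m dvd expansion m L c" and "r < m"
  shows "c 0 r = 0"
proof -
  have "Fpoly m dvd Ppoly m"
    unfolding Ppoly_eq by (rule dvd_triv_right)
  then have "Fpoly m dvd Ppoly m ^ l * q" if "l \<ge> 1" for l q
    using that by (cases l) (simp_all add: dvd_mult2 mult.assoc)
  then have "Fpoly m dvd smult (c 0 m) (Fpoly m) +
      (\<Sum>l\<in>{1..L}. Ppoly m ^ l * (\<Sum>r\<le>m. smult (c (int l) r) (Gpoly m r)))"
    by (intro dvd_add dvd_sum dvd_smult) auto
  moreover have "expansion m L c = lower_row m c 0 + (smult (c 0 m) (Fpoly m) +
      (\<Sum>l\<in>{1..L}. Ppoly m ^ l * (\<Sum>r\<le>m. smult (c (int l) r) (Gpoly m r))))"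
    by (simp add: expansion_split_first_row row_eq_lower_row)
  ultimately have dvd: "Fpoly m dvd lower_row m c 0"
    using assms(1) by (simp add: dvd_add_left_iff)
  have "degree (lower_row m c 0) < m" if "lower_row m c 0 \<noteq> 0"
    using that unfolding lower_row_def
    by (intro degree_sum_less) (auto simp: degree_Gpoly intro: le_less_trans[OF degree_smult_le] gr0I)
  then have "lower_row m c 0 = 0"
    using dvd_imp_degree_le[OF dvd] degree_Fpoly[of m] by fastforce
  then show ?thesis
    using sum_smult_eq_0_distinct_degree[of "{..<m}" "Gpoly m" "c 0"] assms(2)
    by (simp add: lower_row_def Gpoly_nonzero degree_Gpoly)
qed

lemma expansion_eq_sum_ffall:
  assumes "\<forall>r<m. c 0 r = 0"
  shows "expansion m L c = smult (c 0 m) (ffall m (pX - 1)) +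
    (\<Sum>l\<in>{1..L}. \<Sum>r\<le>m.
       smult (c (int l) r) ((ffall (m + 1) pX) ^ l * ffall r (pX + of_nat r - of_nat m - 1)))"
proof -
  have "lower_row m c 0 = 0"
    using assms by (simp add: lower_row_def)
  then have "expansion m L c = smult (c 0 m) (Fpoly m) +
      (\<Sum>l\<in>{1..L}. Ppoly m ^ l * (\<Sum>r\<le>m. smult (c (int l) r) (Gpoly m r)))"
    by (simp add: expansion_split_first_row row_eq_lower_row)
  then show ?thesis
    by (simp add: sum_distrib_left mult_smult_right Fpoly_def Ppoly_def Gpoly_def)
qed

lemma is_expansion_iff:
  "is_expansion m k c \<longleftrightarrow>
     supported_box m (qk m k) c \<and> (\<forall>r<m. c 0 r = 0) \<and> Fpoly m ^ k = expansion m (qk m k) c"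
proof -
  have "(\<forall>l r. c l r \<noteq> 0 \<longrightarrow> (l = 0 \<and> r = m) \<or> (1 \<le> l \<and> l \<le> int (qk m k) \<and> r \<le> m)) \<longleftrightarrow>
      supported_box m (qk m k) c \<and> (\<forall>r<m. c 0 r = 0)"
    unfolding supported_box_def by (auto 4 3 simp: order_le_less)
  then show ?thesis
    unfolding is_expansion_def by (auto simp: expansion_eq_sum_ffall Fpoly_def)
qed

lemma is_expansion_exists:
  assumes "k \<ge> 1"
  shows "\<exists>c. is_expansion m k c"
proof -
  have "m * k < (qk m k + 1) * (m + 1)"
    using dividend_less_div_times[of "m + 1" "m * k"] by (simp add: qk_def algebra_simps)
  then have "degree (Fpoly m ^ k) < (qk m k + 1) * (m + 1)"
    by (simp add: degree_power_eq Fpoly_nonzero degree_Fpoly mult.commute)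
  then obtain c where c: "supported_box m (qk m k) c" "Fpoly m ^ k = expansion m (qk m k) c"
    by (rule expansion_exists)
  moreover have "Fpoly m dvd expansion m (qk m k) c"
    using assms by (simp flip: c(2))
  then have "\<forall>r<m. c 0 r = 0"
    using Fpoly_dvd_expansion_imp_coef_eq_0 by blast
  ultimately show ?thesis
    using is_expansion_iff by blast
qed

lemma is_expansion_unique: "is_expansion m k c \<Longrightarrow> is_expansion m k c' \<Longrightarrow> c = c'"
  unfolding is_expansion_iff by (metis expansion_inject)

lemma is_expansion_acoef: "k \<ge> 1 \<Longrightarrow> is_expansion m k (acoef m k)"
  unfolding acoef_def by (metis is_expansion_exists is_expansion_unique theI)

lemma acoef_expansion:
  assumes "k \<ge> 1" and "qk m k \<le> L"
  shows "supported_box m L (acoef m k)" and "\<forall>r<m. acoef m k 0 r = 0"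
    and "Fpoly m ^ k = expansion m L (acoef m k)"
proof -
  have own: "supported_box m (qk m k) (acoef m k)" "\<forall>r<m. acoef m k 0 r = 0"
    "Fpoly m ^ k = expansion m (qk m k) (acoef m k)"
    using is_expansion_acoef[OF assms(1), of m] by (simp_all add: is_expansion_iff)
  then show "supported_box m L (acoef m k)" "\<forall>r<m. acoef m k 0 r = 0"
    "Fpoly m ^ k = expansion m L (acoef m k)"
    using assms(2) supported_box_mono expansion_mono by metis+
qed

(* The guard s \<le> m keeps the support inside the box: for s = m + 1 the formula would
   read c (l + 1) m. *)
definition quotient_coef :: "nat \<Rightarrow> (int \<Rightarrow> nat \<Rightarrow> real) \<Rightarrow> int \<Rightarrow> nat \<Rightarrow> real" where
  "quotient_coef m c l s =
     (if s \<le> m then (if s = 0 then c l m else c (l + 1) (s - 1)) + (real m - real s) * c (l + 1) s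
      else 0)"

lemma supported_quotient_coef:
  assumes "supported_box m L c" and "\<forall>r<m. c 0 r = 0"
  shows "supported_box m L (quotient_coef m c)"
  unfolding supported_box_def
proof (intro allI impI)
  fix l s
  assume nz: "quotient_coef m c l s \<noteq> 0"
  then have "s \<le> m"
    by (simp add: quotient_coef_def split: if_splits)
  have "c l m \<noteq> 0 \<or> (\<exists>r<m. c (l + 1) r \<noteq> 0)"
  proof (cases "s = 0")
    case True
    then show ?thesis
      using nz by (auto simp: quotient_coef_def)
  next
    case False
    with nz \<open>s \<le> m\<close> have "c (l + 1) (s - 1) \<noteq> 0 \<or> (s < m \<and> c (l + 1) s \<noteq> 0)"
      by (auto simp: quotient_coef_def)
    moreover have "s - 1 < m"
      using False \<open>s \<le> m\<close> by linarith
    ultimately show ?thesis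
      by blast
  qed
  then consider "c l m \<noteq> 0" | r where "r < m" and "c (l + 1) r \<noteq> 0"
    by blast
  then show "0 \<le> l \<and> l \<le> int L \<and> s \<le> m"
  proof cases
    case 1
    then show ?thesis
      using assms(1) \<open>s \<le> m\<close> unfolding supported_box_def by blast
  next
    case 2
    then have "0 \<le> l + 1" "l + 1 \<le> int L" "l + 1 \<noteq> 0"
      using assms unfolding supported_box_def by auto
    then show ?thesis
      using \<open>s \<le> m\<close> by linarith
  qed
qed

lemma row_quotient_coef:
  "(\<Sum>s\<le>m. smult (quotient_coef m c l s) (Gpoly m s)) = [:c l m:] + pX * lower_row m c (l + 1)"
proof -
  have "(\<Sum>s\<le>m. smult (quotient_coef m c l s) (Gpoly m s)) =
      (\<Sum>s\<le>m. smult (if s = 0 then c l m else c (l + 1) (s - 1)) (Gpoly m s)) +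
      (\<Sum>s\<le>m. smult ((real m - real s) * c (l + 1) s) (Gpoly m s))"
    by (simp add: quotient_coef_def smult_add_left sum.distrib)
  also have "(\<Sum>s\<le>m. smult (if s = 0 then c l m else c (l + 1) (s - 1)) (Gpoly m s)) =
      [:c l m:] + (\<Sum>r<m. smult (c (l + 1) r) (Gpoly m (Suc r)))"
    by (simp add: sum.atMost_shift)
  also have "(\<Sum>s\<le>m. smult ((real m - real s) * c (l + 1) s) (Gpoly m s)) =
      (\<Sum>r<m. smult ((real m - real r) * c (l + 1) r) (Gpoly m r))"
    by (simp flip: lessThan_Suc_atMost)
  also have "[:c l m:] + (\<Sum>r<m. smult (c (l + 1) r) (Gpoly m (Suc r))) +
      (\<Sum>r<m. smult ((real m - real r) * c (l + 1) r) (Gpoly m r)) =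
      [:c l m:] + (\<Sum>r<m. smult (c (l + 1) r) (pX * Gpoly m r))"
    unfolding pX_mult_Gpoly by (simp add: smult_add_right sum.distrib add.assoc mult.commute)
  finally show ?thesis
    by (simp only: lower_row_def sum_distrib_left mult_smult_right)
qed

lemma expansion_eq_Fpoly_mult:
  assumes "supported_box m L c" and "\<forall>r<m. c 0 r = 0"
  shows "expansion m L c = Fpoly m * expansion m L (quotient_coef m c)"
proof -
  define low where "low l = Ppoly m ^ l * lower_row m c (int l)" for l
  have "low 0 = 0"
    using assms(2) by (simp add: low_def lower_row_def)
  moreover have "c (int (Suc L)) r = 0" for r
    using assms(1) unfolding supported_box_def by force
  then have "low (Suc L) = 0"
    by (simp add: low_def lower_row_def)
  ultimately have shift: "(\<Sum>l\<le>L. low (Suc l)) = (\<Sum>l\<le>L. low l)"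
    using sum.atMost_Suc_shift[of low L] sum.atMost_Suc[of low L] by simp
  have "Fpoly m * expansion m L (quotient_coef m c) =
      (\<Sum>l\<le>L. smult (c (int l) m) (Ppoly m ^ l * Fpoly m) + low (Suc l))"
    by (simp add: expansion_by_rows row_quotient_coef low_def sum_distrib_left Ppoly_eq algebra_simps)
  also have "\<dots> = (\<Sum>l\<le>L. smult (c (int l) m) (Ppoly m ^ l * Fpoly m) + low l)"
    by (simp only: sum.distrib shift)
  also have "\<dots> = expansion m L c"
    by (simp add: expansion_by_rows row_eq_lower_row low_def algebra_simps)
  finally show ?thesis ..
qed

lemma acoef_eq_quotient_coef:
  assumes "k \<ge> 1"
  shows "acoef m k = quotient_coef m (acoef m (Suc k))"
proof -
  let ?c = "acoef m (Suc k)" and ?L = "qk m (Suc k)"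
  have "qk m k \<le> ?L"
    by (simp add: qk_def div_le_mono)
  then have c': "supported_box m ?L (acoef m k)" "Fpoly m ^ k = expansion m ?L (acoef m k)"
    using acoef_expansion[OF assms] by blast+
  have c: "supported_box m ?L ?c" "\<forall>r<m. ?c 0 r = 0" "Fpoly m ^ Suc k = expansion m ?L ?c"
    using acoef_expansion[of "Suc k" m ?L] by simp_all
  have "Fpoly m * expansion m ?L (acoef m k) = Fpoly m * expansion m ?L (quotient_coef m ?c)"
    using c c'(2) expansion_eq_Fpoly_mult[OF c(1,2)] by simp
  then have "expansion m ?L (acoef m k) = expansion m ?L (quotient_coef m ?c)"
    using Fpoly_nonzero by simp
  then show ?thesis
    using expansion_inject c'(1) supported_quotient_coef[OF c(1,2)] by blast
qed

theorem lemma7p2: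
  fixes m k :: nat
  assumes "m \<ge> 1" and "k \<ge> 2"
  shows "(\<forall>l::int. l \<ge> 0 \<longrightarrow> (\<forall>r<m.
            acoef m k l r = acoef m (k - 1) (l - 1) (r + 1) - real (m - r - 1) * acoef m k l (r + 1)))
       \<and> (\<forall>l::int. l \<ge> 0 \<longrightarrow>
            acoef m k l m = acoef m (k - 1) l 0 - real m * acoef m k (l + 1) 0)"
proof -
  have "acoef m (k - 1) = quotient_coef m (acoef m k)"
    using acoef_eq_quotient_coef[of "k - 1" m] assms(2) by simp
  then show ?thesis
    by (simp add: quotient_coef_def of_nat_diff)
qed

end
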